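(* For any $\alpha\ge1$, $\gamma>1$ and $\varepsilon>0$ there exists an instance and an outcome in it which satisfies $\alpha$-proportional fairness but is not in the $\left(\gamma,\frac{\gamma\alpha+1}{\gamma-1}-\varepsilon\right)$-transferable core.
   Context: Let $(\mathcal X,d)$ be a metric space, $N=[n]$ a set of agents and $C$ a set of candidates located in $\mathcal X$, $k\in\mathbb N^+$; an outcome is $W\subseteq C$ with $|W|\le k$; $d(i,W)=\min_{c\in W}d(i,c)$. $\alpha$-proportional fairness: there is no group $N'\subseteq N$ with $|N'|\ge n/k$ and candidate $c\in C\setminus W$ such that $\alpha\, d(i,c)<d(i,W)$ for all $i\in N'$. $(\gamma,\alpha)$-transferable core: $W$ is in it if there is no group $N'\subseteq N$ and candidate $c\in C\setminus W$ with $|N'|\ge\gamma n/k$ and $\alpha\sum_{i\in N'}d(i,c)<\sum_{i\in N'}d(i,W)$. *)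

theory Defs
  imports Complex_Main
begin

text \<open>An instance: a metric space given by a carrier X of points (type nat) with a
  distance function d; agents 0..n-1 located at points xa i; a finite set C of
  candidate indices, candidate c located at point xc c; a committee size k.\<close>

definition metric_on :: "nat set \<Rightarrow> (nat \<Rightarrow> nat \<Rightarrow> real) \<Rightarrow> bool" where
  "metric_on X d \<longleftrightarrow>
     (\<forall>x\<in>X. \<forall>y\<in>X. d x y \<ge> 0 \<and> (d x y = 0 \<longleftrightarrow> x = y) \<and> d x y = d y x) \<and>
     (\<forall>x\<in>X. \<forall>y\<in>X. \<forall>z\<in>X. d x z \<le> d x y + d y z)"

definition is_instance :: "nat set \<Rightarrow> (nat \<Rightarrow> nat \<Rightarrow> real) \<Rightarrow> nat \<Rightarrow> (nat \<Rightarrow> nat)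
    \<Rightarrow> nat set \<Rightarrow> (nat \<Rightarrow> nat) \<Rightarrow> nat \<Rightarrow> bool" where
  "is_instance X d n xa C xc k \<longleftrightarrow>
     metric_on X d \<and> n \<ge> 1 \<and> k \<ge> 1 \<and> finite C \<and> C \<noteq> {} \<and>
     (\<forall>i<n. xa i \<in> X) \<and> (\<forall>c\<in>C. xc c \<in> X)"

definition dist_ac :: "(nat \<Rightarrow> nat \<Rightarrow> real) \<Rightarrow> (nat \<Rightarrow> nat) \<Rightarrow> (nat \<Rightarrow> nat) \<Rightarrow> nat \<Rightarrow> nat \<Rightarrow> real" where
  "dist_ac d xa xc i c = d (xa i) (xc c)"

definition dist_set :: "(nat \<Rightarrow> nat \<Rightarrow> real) \<Rightarrow> (nat \<Rightarrow> nat) \<Rightarrow> (nat \<Rightarrow> nat) \<Rightarrow> nat \<Rightarrow> nat set \<Rightarrow> real" where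
  "dist_set d xa xc i W = Min ((\<lambda>c. dist_ac d xa xc i c) ` W)"

definition outcome :: "nat set \<Rightarrow> nat \<Rightarrow> nat set \<Rightarrow> bool" where
  "outcome C k W \<longleftrightarrow> W \<subseteq> C \<and> card W \<le> k"

definition prop_fair :: "real \<Rightarrow> (nat \<Rightarrow> nat \<Rightarrow> real) \<Rightarrow> nat \<Rightarrow> (nat \<Rightarrow> nat)
    \<Rightarrow> nat set \<Rightarrow> (nat \<Rightarrow> nat) \<Rightarrow> nat \<Rightarrow> nat set \<Rightarrow> bool" where
  "prop_fair \<alpha> d n xa C xc k W \<longleftrightarrow>
     \<not> (\<exists>N'. N' \<subseteq> {..<n} \<and> real (card N') \<ge> real n / real k \<and>
          (\<exists>c\<in>C - W. \<forall>i\<in>N'. \<alpha> * dist_ac d xa xc i c < dist_set d xa xc i W))"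

definition transferable_core :: "real \<Rightarrow> real \<Rightarrow> (nat \<Rightarrow> nat \<Rightarrow> real) \<Rightarrow> nat \<Rightarrow> (nat \<Rightarrow> nat)
    \<Rightarrow> nat set \<Rightarrow> (nat \<Rightarrow> nat) \<Rightarrow> nat \<Rightarrow> nat set \<Rightarrow> bool" where
  "transferable_core \<gamma> \<alpha> d n xa C xc k W \<longleftrightarrow>
     \<not> (\<exists>N'. N' \<subseteq> {..<n} \<and> real (card N') \<ge> \<gamma> * real n / real k \<and>
          (\<exists>c\<in>C - W. \<alpha> * (\<Sum>i\<in>N'. dist_ac d xa xc i c) < (\<Sum>i\<in>N'. dist_set d xa xc i W)))"

end

theory Submission
  imports Defs
begin

text \<open>Put the elected candidate w at 0 on a line, the deviating candidate c at 1 + \<alpha>, and a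
  middle point at \<alpha>. Of the n = k (m + 1) agents, m sit on c and b sit at the middle point.
  Only the m agents on c gain a factor \<alpha> by switching to c, and m < n/k, so {w} is
  \<alpha>-proportionally fair.
  The m + b agents together, however, have total distance b to c against m (1 + \<alpha>) + b \<alpha> to W.
  With b just above (\<gamma> - 1)(m + 1) they form a coalition of size \<gamma> n/k, and as m grows
  their cost ratio tends to \<alpha> + (1 + \<alpha>)/(\<gamma> - 1) = (\<gamma> \<alpha> + 1)/(\<gamma> - 1).\<close>

definition line_dist :: "(nat \<Rightarrow> real) \<Rightarrow> nat \<Rightarrow> nat \<Rightarrow> real" where
  "line_dist p x y = \<bar>p x - p y\<bar>"

lemma metric_on_line_dist: "inj_on p X \<Longrightarrow> metric_on X (line_dist p)"
  unfolding metric_on_def line_dist_def inj_on_def by auto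

lemma dist_set_singleton [simp]: "dist_set d xa xc i {w} = dist_ac d xa xc i w"
  unfolding dist_set_def by simp

lemma prop_fair_if_few_blocking:
  assumes "\<And>c. c \<in> C - W \<Longrightarrow>
    real (card {i. i < n \<and> \<alpha> * dist_ac d xa xc i c < dist_set d xa xc i W}) < real n / real k"
  shows "prop_fair \<alpha> d n xa C xc k W"
  unfolding prop_fair_def
proof
  assume "\<exists>N'. N' \<subseteq> {..<n} \<and> real n / real k \<le> real (card N') \<and>
    (\<exists>c\<in>C - W. \<forall>i\<in>N'. \<alpha> * dist_ac d xa xc i c < dist_set d xa xc i W)"
  then obtain N' c where "N' \<subseteq> {..<n}" "real n / real k \<le> real (card N')" "c \<in> C - W"
    "\<forall>i\<in>N'. \<alpha> * dist_ac d xa xc i c < dist_set d xa xc i W"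
    by blast
  then have "N' \<subseteq> {i. i < n \<and> \<alpha> * dist_ac d xa xc i c < dist_set d xa xc i W}"
    by blast
  then have "card N' \<le> card {i. i < n \<and> \<alpha> * dist_ac d xa xc i c < dist_set d xa xc i W}"
    by (intro card_mono) auto
  with assms[OF \<open>c \<in> C - W\<close>] \<open>real n / real k \<le> real (card N')\<close> show False
    by linarith
qed

lemma sum_lessThan_add_if_less:
  "(\<Sum>i<a+b. if i < a then (x::real) else y) = real a * x + real b * y"
  by (induction b) (auto simp: algebra_simps)

lemma real_mult_div_cancel_left_Suc:
  "real ((b + 1) * (m + 1)) / real (b + 1) = real m + 1"
  by (simp add: field_simps)

definition line3_pos :: "real \<Rightarrow> nat \<Rightarrow> real" where
  "line3_pos \<alpha> x = (if x = 0 then 0 else if x = 1 then \<alpha> else 1 + \<alpha>)"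

definition agent_loc :: "nat \<Rightarrow> nat \<Rightarrow> nat \<Rightarrow> nat" where
  "agent_loc m b i = (if i < m then 2 else if i < m + b then 1 else 0)"

abbreviation line3_dist :: "real \<Rightarrow> nat \<Rightarrow> nat \<Rightarrow> real" where
  "line3_dist \<alpha> \<equiv> line_dist (line3_pos \<alpha>)"

lemma is_instance_line3:
  assumes "\<alpha> > 0"
  shows "is_instance {0,1,2} (line3_dist \<alpha>) ((b + 1) * (m + 1)) (agent_loc m b) {0,2} id (b + 1)"
proof -
  have "inj_on (line3_pos \<alpha>) {0,1,2}"
    using assms by (auto simp: inj_on_def line3_pos_def)
  then show ?thesis
    unfolding is_instance_def by (auto simp: metric_on_line_dist agent_loc_def)
qed

lemma prop_fair_line3:
  assumes "\<alpha> > 0"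
  shows "prop_fair \<alpha> (line3_dist \<alpha>) ((b + 1) * (m + 1)) (agent_loc m b) {0,2} id (b + 1) {0}"
proof (rule prop_fair_if_few_blocking)
  fix c :: nat
  assume "c \<in> {0,2} - {0}"
  then have "c = 2" by simp
  let ?blocking = "{i. i < (b + 1) * (m + 1) \<and>
      \<alpha> * dist_ac (line3_dist \<alpha>) (agent_loc m b) id i c
        < dist_set (line3_dist \<alpha>) (agent_loc m b) id i {0}}"
  have "line3_dist \<alpha> (agent_loc m b i) 0 \<le> \<alpha> * line3_dist \<alpha> (agent_loc m b i) 2"
    if "\<not> i < m" for i
    using assms that by (auto simp: agent_loc_def line_dist_def line3_pos_def)
  then have "?blocking \<subseteq> {..<m}"
    by (force simp: \<open>c = 2\<close> dist_ac_def)
  then have "card ?blocking \<le> m"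
    using card_mono[of "{..<m}"] by fastforce
  then show "real (card ?blocking) < real ((b + 1) * (m + 1)) / real (b + 1)"
    unfolding real_mult_div_cancel_left_Suc by linarith
qed

lemma not_transferable_core_line3:
  assumes "\<alpha> > 0" and "\<gamma> * (real m + 1) \<le> real (m + b)"
    and "\<beta> * real b < real m * (1 + \<alpha>) + real b * \<alpha>"
  shows "\<not> transferable_core \<gamma> \<beta> (line3_dist \<alpha>) ((b + 1) * (m + 1)) (agent_loc m b) {0,2} id
           (b + 1) {0}"
  unfolding transferable_core_def not_not
proof (intro exI conjI bexI)
  show "{..<m + b} \<subseteq> {..<(b + 1) * (m + 1)}"
    by (auto simp: algebra_simps)
  show "\<gamma> * real ((b + 1) * (m + 1)) / real (b + 1) \<le> real (card {..<m + b})"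
    unfolding times_divide_eq_right[symmetric] real_mult_div_cancel_left_Suc using assms(2) by simp
  show "(2::nat) \<in> {0,2} - {0}" by simp
  have "(\<Sum>i<m + b. dist_ac (line3_dist \<alpha>) (agent_loc m b) id i 2) = real m * 0 + real b * 1"
    unfolding sum_lessThan_add_if_less[symmetric] dist_ac_def
    using assms(1) by (intro sum.cong) (auto simp: agent_loc_def line_dist_def line3_pos_def)
  moreover have "(\<Sum>i<m + b. dist_set (line3_dist \<alpha>) (agent_loc m b) id i {0})
      = real m * (1 + \<alpha>) + real b * \<alpha>"
    unfolding sum_lessThan_add_if_less[symmetric] dist_set_singleton dist_ac_def
    using assms(1) by (intro sum.cong) (auto simp: agent_loc_def line_dist_def line3_pos_def)
  ultimately show "\<beta> * (\<Sum>i<m + b. dist_ac (line3_dist \<alpha>) (agent_loc m b) id i 2)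
      < (\<Sum>i<m + b. dist_set (line3_dist \<alpha>) (agent_loc m b) id i {0})"
    using assms(3) by simp
qed

lemma exists_coalition_sizes:
  fixes \<gamma> \<epsilon> a :: real
  assumes "\<gamma> > 1" and "\<epsilon> > 0" and "a > 0"
  obtains m b :: nat
  where "\<gamma> * (real m + 1) \<le> real (m + b)" and "(a / (\<gamma> - 1) - \<epsilon>) * real b < a * real m"
proof -
  define L where "L = a / (\<gamma> - 1)"
  have "L > 0" and L_eq: "L * (\<gamma> - 1) = a"
    using assms by (simp_all add: L_def)
  obtain m :: nat where m_large: "L * (\<gamma> + 1) / (\<epsilon> * (\<gamma> - 1)) < real m"
    using reals_Archimedean2 by blast
  then have m_large': "L * (\<gamma> + 1) < \<epsilon> * (\<gamma> - 1) * real m"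
    using assms by (simp add: field_simps)
  have "0 < L * (\<gamma> + 1) / (\<epsilon> * (\<gamma> - 1))"
    using \<open>L > 0\<close> assms by simp
  with m_large have "0 < real m" by linarith
  \<comment> \<open>the least b with m + b \<ge> \<gamma> (m + 1), up to one\<close>
  define b :: nat where "b = nat \<lceil>(\<gamma> - 1) * (real m + 1)\<rceil> + 1"
  have b_lower: "(\<gamma> - 1) * (real m + 1) + 1 \<le> real b"
    unfolding b_def by linarith
  have b_upper: "real b \<le> (\<gamma> - 1) * (real m + 1) + 2"
    unfolding b_def using assms by (simp add: of_nat_nat) linarith
  have "\<gamma> * (real m + 1) \<le> real (m + b)"
    using b_lower by (simp add: algebra_simps)
  moreover have "(L - \<epsilon>) * real b < a * real m"
  proof (cases "L \<le> \<epsilon>")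
    case True
    then have "(L - \<epsilon>) * real b \<le> 0" by (simp add: mult_nonpos_nonneg)
    moreover have "0 < a * real m"
      using \<open>0 < real m\<close> \<open>a > 0\<close> by simp
    ultimately show ?thesis by linarith
  next
    case False
    have "0 < \<epsilon> * (\<gamma> + 1)"
      using assms by simp
    have "(L - \<epsilon>) * real b \<le> (L - \<epsilon>) * ((\<gamma> - 1) * (real m + 1) + 2)"
      using False b_upper by (intro mult_left_mono) auto
    also have "\<dots> = a * real m + L * (\<gamma> + 1) - \<epsilon> * ((\<gamma> - 1) * (real m + 1) + 2)"
      unfolding L_eq[symmetric] by (simp add: algebra_simps)
    also have "\<dots> < a * real m"
      using m_large' \<open>0 < \<epsilon> * (\<gamma> + 1)\<close> by (simp add: algebra_simps)
    finally show ?thesis .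
  qed
  ultimately show ?thesis
    using that L_def by blast
qed

theorem theorem4:
  fixes \<alpha> \<gamma> \<epsilon> :: real
  assumes "\<alpha> \<ge> 1" and "\<gamma> > 1" and "\<epsilon> > 0"
  shows "\<exists>X d n xa C xc k W.
           is_instance X d n xa C xc k \<and> outcome C k W \<and> W \<noteq> {} \<and>
           prop_fair \<alpha> d n xa C xc k W \<and>
           \<not> transferable_core \<gamma> ((\<gamma> * \<alpha> + 1) / (\<gamma> - 1) - \<epsilon>) d n xa C xc k W"
proof -
  have "\<alpha> > 0" using assms(1) by simp
  obtain m b :: nat where coalition: "\<gamma> * (real m + 1) \<le> real (m + b)"
    and ratio: "((1 + \<alpha>) / (\<gamma> - 1) - \<epsilon>) * real b < (1 + \<alpha>) * real m"
    using exists_coalition_sizes[OF assms(2,3), of "1 + \<alpha>"] \<open>\<alpha> > 0\<close> by auto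
  have "(\<gamma> * \<alpha> + 1) / (\<gamma> - 1) = \<alpha> + (1 + \<alpha>) / (\<gamma> - 1)"
    using assms(2) by (simp add: field_simps)
  with ratio have "((\<gamma> * \<alpha> + 1) / (\<gamma> - 1) - \<epsilon>) * real b < real m * (1 + \<alpha>) + real b * \<alpha>"
    by (simp add: algebra_simps)
  then have "\<not> transferable_core \<gamma> ((\<gamma> * \<alpha> + 1) / (\<gamma> - 1) - \<epsilon>) (line3_dist \<alpha>)
      ((b + 1) * (m + 1)) (agent_loc m b) {0,2} id (b + 1) {0}"
    using not_transferable_core_line3 \<open>\<alpha> > 0\<close> coalition by blast
  moreover have "outcome {0,2} (b + 1) {0}"
    by (simp add: outcome_def)
  ultimately show ?thesis
    using is_instance_line3 prop_fair_line3 \<open>\<alpha> > 0\<close> by blast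
qed

end
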